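(* Let $(W,S)$ be a finitely generated Coxeter system and $u\le v$ in $(W,\le)$. The Möbius function of $(W,\le)$ satisfies $$\mu(u,v)=\begin{cases}(-1)^{|S(v)|-|S(u)|}&\text{if } S(u)=S(v)\setminus \mathrm{Des}(v^{S(u)})\text{ or } u=v,\\ 0&\text{otherwise.}\end{cases}$$ In particular, for every $v\in W$, $\mu(e,v)=(-1)^{|S(v)|}$ if $W_{S(v)}$ is finite and $v=w_0(S(v))$, and $\mu(e,v)=0$ otherwise.
   Context: $(W,S)$ is a finitely generated Coxeter system with length function $\ell$ and identity $e$. For $w\in W$, $S(w)\subseteq S$ is the set of simple reflections appearing in a (any) reduced expression of $w$; $\mathrm{Des}(w)=\{s\in S:\ell(ws)<\ell(w)\}$. For $I\subseteq S$, $W_I$ is the parabolic subgroup generated by $I$, $X_I=\{u\in W:\ell(us)>\ell(u)\ \forall s\in I\}$, and every $w\in W$ factors uniquely as $w=w^Iw_I$ with $w^I\in X_I$, $w_I\in W_I$ (parabolic components along $I$). The partial order on $W$: $u\le v$ if and only if $v_{S(u)}=u$. For $K\subseteq S$ with $W_K$ finite, $w_0(K)$ denotes the unique element of maximal length in $W_K$. *)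

theory Defs
  imports "HOL-Algebra.Group"
begin

definition wprod :: "'a monoid \<Rightarrow> 'a list \<Rightarrow> 'a" where
  "wprod G xs = foldr (\<lambda>x y. x \<otimes>\<^bsub>G\<^esub> y) xs \<one>\<^bsub>G\<^esub>"

definition clen :: "'a monoid \<Rightarrow> 'a set \<Rightarrow> 'a \<Rightarrow> nat" where
  "clen G S w = (LEAST n. \<exists>xs. set xs \<subseteq> S \<and> length xs = n \<and> wprod G xs = w)"

definition reduced_word :: "'a monoid \<Rightarrow> 'a set \<Rightarrow> 'a \<Rightarrow> 'a list \<Rightarrow> bool" where
  "reduced_word G S w xs \<longleftrightarrow> set xs \<subseteq> S \<and> wprod G xs = w \<and> length xs = clen G S w"

text \<open>(G,S) is a Coxeter system: G is a group generated by the involutions in S and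
  the exchange property holds (Bjoerner--Brenti, Thm. 1.5.1).\<close>
definition coxeter_system :: "'a monoid \<Rightarrow> 'a set \<Rightarrow> bool" where
  "coxeter_system G S \<longleftrightarrow>
     group G \<and> S \<subseteq> carrier G \<and>
     (\<forall>s\<in>S. s \<noteq> \<one>\<^bsub>G\<^esub> \<and> s \<otimes>\<^bsub>G\<^esub> s = \<one>\<^bsub>G\<^esub>) \<and>
     carrier G = {wprod G xs | xs. set xs \<subseteq> S} \<and>
     (\<forall>s\<in>S. \<forall>xs. set xs \<subseteq> S \<and> length xs = clen G S (wprod G xs) \<and>
         clen G S (s \<otimes>\<^bsub>G\<^esub> wprod G xs) \<le> length xs \<longrightarrow>
         (\<exists>i<length xs. s \<otimes>\<^bsub>G\<^esub> wprod G xs = wprod G (take i xs @ drop (Suc i) xs)))"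

definition supp :: "'a monoid \<Rightarrow> 'a set \<Rightarrow> 'a \<Rightarrow> 'a set" where
  "supp G S w = {s. \<exists>xs. reduced_word G S w xs \<and> s \<in> set xs}"

definition descents :: "'a monoid \<Rightarrow> 'a set \<Rightarrow> 'a \<Rightarrow> 'a set" where
  "descents G S w = {s\<in>S. clen G S (w \<otimes>\<^bsub>G\<^esub> s) < clen G S w}"

definition parabolic :: "'a monoid \<Rightarrow> 'a set \<Rightarrow> 'a set" where
  "parabolic G I = {wprod G xs | xs. set xs \<subseteq> I}"

definition minreps :: "'a monoid \<Rightarrow> 'a set \<Rightarrow> 'a set \<Rightarrow> 'a set" where
  "minreps G S I = {u\<in>carrier G. \<forall>s\<in>I. clen G S (u \<otimes>\<^bsub>G\<^esub> s) > clen G S u}"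

definition par_quot :: "'a monoid \<Rightarrow> 'a set \<Rightarrow> 'a set \<Rightarrow> 'a \<Rightarrow> 'a" where
  "par_quot G S I w = (THE u. u \<in> minreps G S I \<and> (\<exists>x\<in>parabolic G I. w = u \<otimes>\<^bsub>G\<^esub> x))"

definition par_comp :: "'a monoid \<Rightarrow> 'a set \<Rightarrow> 'a set \<Rightarrow> 'a \<Rightarrow> 'a" where
  "par_comp G S I w = (THE x. x \<in> parabolic G I \<and> w = par_quot G S I w \<otimes>\<^bsub>G\<^esub> x)"

definition cox_le :: "'a monoid \<Rightarrow> 'a set \<Rightarrow> 'a \<Rightarrow> 'a \<Rightarrow> bool" where
  "cox_le G S u v \<longleftrightarrow> u \<in> carrier G \<and> v \<in> carrier G \<and> par_comp G S (supp G S u) v = u"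

definition longest :: "'a monoid \<Rightarrow> 'a set \<Rightarrow> 'a set \<Rightarrow> 'a" where
  "longest G S K = (THE w. w \<in> parabolic G K \<and> (\<forall>x\<in>parabolic G K. clen G S x \<le> clen G S w))"

definition is_mobius :: "('a \<Rightarrow> 'a \<Rightarrow> bool) \<Rightarrow> 'a set \<Rightarrow> ('a \<Rightarrow> 'a \<Rightarrow> int) \<Rightarrow> bool" where
  "is_mobius rel A f \<longleftrightarrow>
     (\<forall>u v. f u v = (if u \<in> A \<and> v \<in> A \<and> rel u v then
                       (if u = v then 1 else - (\<Sum>z\<in>{z\<in>A. rel u z \<and> rel z v \<and> z \<noteq> v}. f u z))
                     else 0))"

definition mobius :: "('a \<Rightarrow> 'a \<Rightarrow> bool) \<Rightarrow> 'a set \<Rightarrow> 'a \<Rightarrow> 'a \<Rightarrow> int" where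
  "mobius rel A = (THE f. is_mobius rel A f)"

end

theory Submission
  imports Defs
begin

text \<open>
  By definition \<open>u \<le> v\<close> means \<open>u = v_K\<close> for \<open>K = S(u)\<close>, so the interval \<open>[u, v]\<close> is
  parametrised by the sets \<open>K \<subseteq> M \<subseteq> S(v)\<close> with \<open>S(v_M) = M\<close>, via \<open>M \<mapsto> v_M\<close>. Let
  \<open>D = Des(v^K)\<close>. As \<open>v^K = v^M (v_M)^K\<close> with \<open>v^M\<close> a minimal coset representative, the
  descents of \<open>(v_M)^K\<close> lying in \<open>M\<close> are those of \<open>v^K\<close>. Hence the proposed value of
  \<open>\<mu>(u, v_M)\<close> is nonzero exactly when \<open>M \<subseteq> K \<union> D\<close>, and every \<open>M\<close> between \<open>K\<close> and
  \<open>K \<union> (D \<inter> S(v))\<close> satisfies \<open>S(v_M) = M\<close>. The defining sum over \<open>[u, v]\<close> thus becomes an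
  alternating sum over a Boolean interval, which vanishes for \<open>u \<noteq> v\<close>: then \<open>v^K \<noteq> e\<close> has a
  descent, and it lies outside \<open>K\<close>.

  For \<open>u = e\<close> the condition says that every letter of \<open>S(v)\<close> is a descent of \<open>v\<close>. Such a
  \<open>v\<close> is \<open>w\<^sub>0(S(v))\<close>, because every element of the parabolic subgroup \<open>W_S(v)\<close> is then a
  prefix of \<open>v\<close> in the right weak order; this is proved by a rank-two argument with
  alternating words \<open>r s r s \<dots>\<close>.
\<close>

section \<open>Moebius functions of posets\<close>

lemma is_mobiusI:
  assumes refl: "\<And>u. u \<in> A \<Longrightarrow> rel u u"
    and off: "\<And>u v. \<not> (u \<in> A \<and> v \<in> A \<and> rel u v) \<Longrightarrow> f u v = 0"
    and diag: "\<And>u. u \<in> A \<Longrightarrow> f u u = 1"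
    and fin: "\<And>u v. u \<in> A \<Longrightarrow> v \<in> A \<Longrightarrow> rel u v \<Longrightarrow> finite {z \<in> A. rel u z \<and> rel z v}"
    and sum: "\<And>u v. u \<in> A \<Longrightarrow> v \<in> A \<Longrightarrow> rel u v \<Longrightarrow> u \<noteq> v \<Longrightarrow>
                (\<Sum>z\<in>{z \<in> A. rel u z \<and> rel z v}. f u z) = 0"
  shows "is_mobius rel A f"
  unfolding is_mobius_def
proof (intro allI)
  fix u v
  show "f u v = (if u \<in> A \<and> v \<in> A \<and> rel u v then
                   (if u = v then 1 else - (\<Sum>z\<in>{z \<in> A. rel u z \<and> rel z v \<and> z \<noteq> v}. f u z))
                 else 0)"
  proof (cases "u \<in> A \<and> v \<in> A \<and> rel u v")
    case True
    then have "{z \<in> A. rel u z \<and> rel z v} = insert v {z \<in> A. rel u z \<and> rel z v \<and> z \<noteq> v}"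
      using refl by auto
    then have "(\<Sum>z\<in>{z \<in> A. rel u z \<and> rel z v}. f u z) =
               f u v + (\<Sum>z\<in>{z \<in> A. rel u z \<and> rel z v \<and> z \<noteq> v}. f u z)"
      using fin[of u v] True by simp
    then show ?thesis
      using True diag sum[of u v] by auto
  next
    case False
    then show ?thesis
      by (subst if_not_P[OF False]) (rule off[OF False])
  qed
qed

lemma is_mobius_unique:
  fixes h :: "'a \<Rightarrow> nat"
  assumes h: "\<And>z v. z \<in> A \<Longrightarrow> v \<in> A \<Longrightarrow> rel z v \<Longrightarrow> z \<noteq> v \<Longrightarrow> h z < h v"
    and f: "is_mobius rel A f" and g: "is_mobius rel A g"
  shows "f = g"
proof (intro ext)
  fix u v
  show "f u v = g u v"
  proof (induction v rule: measure_induct_rule[of h])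
    case (less v)
    have "v \<in> A \<Longrightarrow> (\<Sum>z\<in>{z \<in> A. rel u z \<and> rel z v \<and> z \<noteq> v}. f u z) =
                    (\<Sum>z\<in>{z \<in> A. rel u z \<and> rel z v \<and> z \<noteq> v}. g u z)"
      using less h by (intro sum.cong) auto
    moreover have "f u v = (if u \<in> A \<and> v \<in> A \<and> rel u v then
        (if u = v then 1 else - (\<Sum>z\<in>{z \<in> A. rel u z \<and> rel z v \<and> z \<noteq> v}. f u z)) else 0)"
      "g u v = (if u \<in> A \<and> v \<in> A \<and> rel u v then
        (if u = v then 1 else - (\<Sum>z\<in>{z \<in> A. rel u z \<and> rel z v \<and> z \<noteq> v}. g u z)) else 0)"
      using f g unfolding is_mobius_def by blast+
    ultimately show ?case
      by simp
  qed
qed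

lemma mobius_eqI:
  fixes h :: "'a \<Rightarrow> nat"
  assumes "\<And>z v. z \<in> A \<Longrightarrow> v \<in> A \<Longrightarrow> rel z v \<Longrightarrow> z \<noteq> v \<Longrightarrow> h z < h v"
    and "is_mobius rel A f"
  shows "mobius rel A = f"
  unfolding mobius_def using assms is_mobius_unique by blast

lemma sum_alternating_supersets:
  assumes B: "finite B" and AB: "A \<subset> B"
  shows "(\<Sum>M | A \<subseteq> M \<and> M \<subseteq> B. (-1::int) ^ (card M - card A)) = 0"
proof -
  have "(\<Sum>M | A \<subseteq> M \<and> M \<subseteq> B. (-1::int) ^ (card M - card A)) =
        (\<Sum>M | A \<subseteq> M \<and> M \<subseteq> B. (-1) ^ card A * (-1) ^ card M)"
  proof (intro sum.cong)
    fix M assume "M \<in> {M. A \<subseteq> M \<and> M \<subseteq> B}"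
    then have "card A \<le> card M"
      using B by (auto intro: card_mono finite_subset)
    then show "(-1::int) ^ (card M - card A) = (-1) ^ card A * (-1) ^ card M"
      by (simp flip: power_add neg_one_power_add_eq_neg_one_power_diff add: add.commute)
  qed auto
  also have "\<dots> = (-1) ^ card A * (\<Sum>M | A \<subseteq> M \<and> M \<subseteq> B. (-1) ^ card M)"
    by (simp add: sum_distrib_left)
  also have "(\<Sum>M | A \<subseteq> M \<and> M \<subseteq> B. (-1::int) ^ card M) = 0"
  proof (rule sum_alternating_cancels)
    show "finite {M. A \<subseteq> M \<and> M \<subseteq> B}"
      using B by simp
    have "\<And>P. {M. M \<in> {M. A \<subseteq> M \<and> M \<subseteq> B} \<and> P M} = {M. M \<subseteq> B \<and> A \<subseteq> M \<and> P M}"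
      by auto
    then show "card {M. M \<in> {M. A \<subseteq> M \<and> M \<subseteq> B} \<and> even (card M)} =
               card {M. M \<in> {M. A \<subseteq> M \<and> M \<subseteq> B} \<and> odd (card M)}"
      using card_subsupersets_even_odd[OF B AB] by simp
  qed
  finally show ?thesis
    by simp
qed

section \<open>Words and length\<close>

definition drop_nth :: "nat \<Rightarrow> 'a list \<Rightarrow> 'a list" where
  "drop_nth i xs = take i xs @ drop (Suc i) xs"

lemma set_drop_nth_subset: "set (drop_nth i xs) \<subseteq> set xs"
  unfolding drop_nth_def using set_take_subset set_drop_subset by fastforce

lemma length_drop_nth [simp]: "i < length xs \<Longrightarrow> length (drop_nth i xs) = length xs - 1"
  by (simp add: drop_nth_def)

lemma rev_drop_nth_rev:
  "i < length xs \<Longrightarrow> rev (drop_nth i (rev xs)) = drop_nth (length xs - Suc i) xs"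
  by (simp add: drop_nth_def take_rev drop_rev Suc_diff_Suc)

lemma drop_nth_append:
  "drop_nth i (xs @ ys) =
     (if i < length xs then drop_nth i xs @ ys else xs @ drop_nth (i - length xs) ys)"
  by (auto simp: drop_nth_def Suc_diff_le)

fun alt :: "'a \<Rightarrow> 'a \<Rightarrow> nat \<Rightarrow> 'a list" where
  "alt r s 0 = []"
| "alt r s (Suc k) = r # alt s r k"

lemma set_alt_subset: "set (alt r s k) \<subseteq> {r, s}"
  by (induction k arbitrary: r s) auto

lemma length_alt [simp]: "length (alt r s k) = k"
  by (induction k arbitrary: r s) auto

lemma alt_Suc_snoc: "alt r s (Suc k) = alt r s k @ [if even k then r else s]"
  by (induction k arbitrary: r s) auto

lemma nth_alt: "i < k \<Longrightarrow> alt r s k ! i = (if even i then r else s)"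
  by (induction k arbitrary: i r s) (auto simp: nth_Cons split: nat.split)

locale coxeter = group G for G (structure) +
  fixes S :: "'a set"
  assumes gens_closed: "S \<subseteq> carrier G"
    and gens_involution: "s \<in> S \<Longrightarrow> s \<noteq> \<one> \<and> s \<otimes> s = \<one>"
    and carrier_words: "carrier G = {wprod G xs | xs. set xs \<subseteq> S}"
    and exchange_left: "\<lbrakk>s \<in> S; set xs \<subseteq> S; length xs = clen G S (wprod G xs);
        clen G S (s \<otimes> wprod G xs) \<le> length xs\<rbrakk> \<Longrightarrow>
        \<exists>i<length xs. s \<otimes> wprod G xs = wprod G (drop_nth i xs)"

lemma coxeter_system_imp_coxeter: "coxeter_system G S \<Longrightarrow> coxeter G S"
  unfolding coxeter_system_def coxeter_def coxeter_axioms_def drop_nth_def by blast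

context coxeter
begin

abbreviation len :: "'a \<Rightarrow> nat" where "len \<equiv> clen G S"
abbreviation W :: "'a set \<Rightarrow> 'a set" where "W J \<equiv> parabolic G J"
abbreviation X :: "'a set \<Rightarrow> 'a set" where "X J \<equiv> minreps G S J"
abbreviation sp :: "'a \<Rightarrow> 'a set" where "sp \<equiv> supp G S"
abbreviation Des :: "'a \<Rightarrow> 'a set" where "Des \<equiv> descents G S"
abbreviation pq :: "'a set \<Rightarrow> 'a \<Rightarrow> 'a" where "pq J \<equiv> par_quot G S J"
abbreviation pc :: "'a set \<Rightarrow> 'a \<Rightarrow> 'a" where "pc J \<equiv> par_comp G S J"
abbreviation cle :: "'a \<Rightarrow> 'a \<Rightarrow> bool" (infix "\<preceq>" 50) where "u \<preceq> v \<equiv> cox_le G S u v"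

lemma inv_cancel_left [simp]: "x \<in> carrier G \<Longrightarrow> y \<in> carrier G \<Longrightarrow> x \<otimes> (inv x \<otimes> y) = y"
  by (simp flip: m_assoc)

lemma gen_closed [simp]: "s \<in> S \<Longrightarrow> s \<in> carrier G"
  using gens_closed by blast

lemma gen_square [simp]: "s \<in> S \<Longrightarrow> s \<otimes> s = \<one>"
  using gens_involution by blast

lemma gen_inv [simp]: "s \<in> S \<Longrightarrow> inv s = s"
  by (simp add: inv_equality)

lemma gen_cancel_right [simp]: "s \<in> S \<Longrightarrow> w \<in> carrier G \<Longrightarrow> w \<otimes> s \<otimes> s = w"
  by (simp add: m_assoc)

lemma gen_cancel_left [simp]: "s \<in> S \<Longrightarrow> w \<in> carrier G \<Longrightarrow> s \<otimes> (s \<otimes> w) = w"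
  by (simp flip: m_assoc)

lemma wprod_Nil [simp]: "wprod G [] = \<one>"
  by (simp add: wprod_def)

lemma wprod_Cons [simp]: "wprod G (x # xs) = x \<otimes> wprod G xs"
  by (simp add: wprod_def)

lemma wprod_closed [simp]: "set xs \<subseteq> S \<Longrightarrow> wprod G xs \<in> carrier G"
  by (induction xs) auto

lemma wprod_append:
  "set xs \<subseteq> S \<Longrightarrow> set ys \<subseteq> S \<Longrightarrow> wprod G (xs @ ys) = wprod G xs \<otimes> wprod G ys"
  by (induction xs) (auto simp: m_assoc)

lemma wprod_snoc: "set xs \<subseteq> S \<Longrightarrow> s \<in> S \<Longrightarrow> wprod G (xs @ [s]) = wprod G xs \<otimes> s"
  by (simp add: wprod_append)

lemma inv_wprod: "set xs \<subseteq> S \<Longrightarrow> inv (wprod G xs) = wprod G (rev xs)"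
  by (induction xs) (auto simp: inv_mult_group wprod_snoc)

lemma clen_le_length: "set xs \<subseteq> S \<Longrightarrow> len (wprod G xs) \<le> length xs"
  unfolding clen_def by (rule Least_le) auto

lemma reduced_word_exists:
  assumes "w \<in> carrier G"
  obtains xs where "set xs \<subseteq> S" "length xs = len w" "wprod G xs = w"
proof -
  have "\<exists>n xs. set xs \<subseteq> S \<and> length xs = n \<and> wprod G xs = w"
    using assms carrier_words by auto
  from LeastI_ex[OF this] obtain xs where
    "set xs \<subseteq> S" "length xs = (LEAST n. \<exists>xs. set xs \<subseteq> S \<and> length xs = n \<and> wprod G xs = w)"
    "wprod G xs = w"
    by blast
  then show thesis
    using that unfolding clen_def by blast
qed

lemma clen_one [simp]: "len \<one> = 0"
  using clen_le_length[of "[]"] by simp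

lemma clen_eq_0_iff: "w \<in> carrier G \<Longrightarrow> len w = 0 \<longleftrightarrow> w = \<one>"
  by (metis clen_one length_0_conv reduced_word_exists wprod_Nil)

lemma clen_inv_le: "w \<in> carrier G \<Longrightarrow> len (inv w) \<le> len w"
  by (metis clen_le_length inv_wprod length_rev reduced_word_exists set_rev)

lemma clen_inv [simp]: "w \<in> carrier G \<Longrightarrow> len (inv w) = len w"
  by (metis clen_inv_le inv_closed inv_inv le_antisym)

lemma clen_mult_le: "a \<in> carrier G \<Longrightarrow> b \<in> carrier G \<Longrightarrow> len (a \<otimes> b) \<le> len a + len b"
  by (metis clen_le_length le_sup_iff length_append reduced_word_exists set_append wprod_append)

lemma clen_gen [simp]: "s \<in> S \<Longrightarrow> len s = 1"
proof -
  assume s: "s \<in> S"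
  have "len s \<le> 1"
    using clen_le_length[of "[s]"] s by simp
  moreover have "s \<noteq> \<one>"
    using gens_involution s by blast
  moreover have "len s \<noteq> 0"
    using clen_eq_0_iff[of s] s \<open>s \<noteq> \<one>\<close> by simp
  ultimately show ?thesis
    by linarith
qed

lemma clen_gen_mult:
  assumes s: "s \<in> S" and w: "w \<in> carrier G"
  shows "len (s \<otimes> w) = len w + 1 \<or> len (s \<otimes> w) + 1 = len w"
proof -
  have up: "len (s \<otimes> w) \<le> len w + 1"
    using clen_mult_le[of s w] s w by simp
  have low: "len w \<le> len (s \<otimes> w) + 1"
    using clen_mult_le[of s "s \<otimes> w"] s w by simp
  obtain xs where xs: "set xs \<subseteq> S" "length xs = len w" "wprod G xs = w"
    using reduced_word_exists w by blast
  have "len (s \<otimes> w) < len w" if "len (s \<otimes> w) \<le> len w"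
  proof -
    have "len (s \<otimes> wprod G xs) \<le> length xs"
      using that xs by simp
    then obtain i where "i < length xs" "s \<otimes> w = wprod G (drop_nth i xs)"
      using exchange_left[OF s xs(1)] xs by auto
    then show ?thesis
      using clen_le_length[of "drop_nth i xs"] set_drop_nth_subset[of i xs] xs by fastforce
  qed
  then show ?thesis
    using up low by linarith
qed

lemma clen_mult_gen:
  assumes s: "s \<in> S" and w: "w \<in> carrier G"
  shows "len (w \<otimes> s) = len w + 1 \<or> len (w \<otimes> s) + 1 = len w"
proof -
  have "len (w \<otimes> s) = len (s \<otimes> inv w)"
    using clen_inv[of "w \<otimes> s"] s w by (simp add: inv_mult_group)
  then show ?thesis
    using clen_gen_mult[of s "inv w"] s w by simp
qed

lemma exchange_right:
  assumes s: "s \<in> S" and xs: "set xs \<subseteq> S" and red: "length xs = len (wprod G xs)"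
    and desc: "len (wprod G xs \<otimes> s) \<le> length xs"
  obtains i where "i < length xs" "wprod G xs \<otimes> s = wprod G (drop_nth i xs)"
proof -
  define w where "w = wprod G xs"
  have w: "w \<in> carrier G"
    using xs w_def by simp
  have rev: "wprod G (rev xs) = inv w"
    using inv_wprod[OF xs] w_def by simp
  then have flip: "s \<otimes> wprod G (rev xs) = inv (w \<otimes> s)"
    using s w by (simp add: inv_mult_group)
  then have "len (s \<otimes> wprod G (rev xs)) \<le> length (rev xs)"
    using desc w s w_def by simp
  moreover have "length (rev xs) = len (wprod G (rev xs))"
    using red rev w w_def by simp
  ultimately obtain i where i: "i < length xs"
    "s \<otimes> wprod G (rev xs) = wprod G (drop_nth i (rev xs))"
    using exchange_left[OF s, of "rev xs"] xs by auto
  have del: "set (drop_nth i (rev xs)) \<subseteq> S"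
    using set_drop_nth_subset[of i "rev xs"] xs by auto
  have "w \<otimes> s = inv (s \<otimes> wprod G (rev xs))"
    using flip s w by simp
  also have "\<dots> = wprod G (drop_nth (length xs - Suc i) xs)"
    using i inv_wprod[OF del] by (simp add: rev_drop_nth_rev)
  finally show thesis
    using that[of "length xs - Suc i"] i(1) w_def by simp
qed

lemma reduced_subword:
  assumes "set xs \<subseteq> S"
  obtains ys where "set ys \<subseteq> set xs" "wprod G ys = wprod G xs" "length ys = len (wprod G xs)"
  using assms
proof (induction xs arbitrary: thesis)
  case Nil
  then show ?case by simp
next
  case (Cons x xs)
  then have x: "x \<in> S" and xs: "set xs \<subseteq> S" by auto
  obtain ys where ys: "set ys \<subseteq> set xs" "wprod G ys = wprod G xs" "length ys = len (wprod G xs)"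
    using Cons.IH xs by blast
  show ?case
  proof (cases "len (x \<otimes> wprod G xs) = len (wprod G xs) + 1")
    case True
    then show ?thesis
      using Cons.prems(1)[of "x # ys"] ys by auto
  next
    case False
    then have "len (x \<otimes> wprod G ys) + 1 = length ys"
      using clen_gen_mult[OF x, of "wprod G xs"] xs ys by simp
    then obtain i where "i < length ys" "x \<otimes> wprod G ys = wprod G (drop_nth i ys)"
      using exchange_left[OF x, of ys] ys xs by fastforce
    then show ?thesis
      using Cons.prems(1)[of "drop_nth i ys"] set_drop_nth_subset[of i ys] ys False
        clen_gen_mult[OF x, of "wprod G xs"] xs by fastforce
  qed
qed

lemma clen_adjacent_equal:
  assumes xs: "set xs \<subseteq> S" and i: "Suc i < length xs" and eq: "xs ! i = xs ! Suc i"
  shows "len (wprod G xs) + 2 \<le> length xs"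
proof -
  define a L R where "a = xs ! i" and "L = take i xs" and "R = drop (Suc (Suc i)) xs"
  have "drop i xs = xs ! i # xs ! Suc i # R"
    using i unfolding R_def by (simp add: Cons_nth_drop_Suc)
  then have split: "xs = L @ a # a # R"
    using eq unfolding a_def L_def by (metis append_take_drop_id)
  then have a: "a \<in> S" and L: "set L \<subseteq> S" and R: "set R \<subseteq> S"
    using xs by auto
  have "wprod G xs = wprod G (L @ R)"
    using split a L R by (simp add: wprod_append)
  then show ?thesis
    using clen_le_length[of "L @ R"] L R split by simp
qed

lemma wprod_snoc_cancel:
  assumes xs: "set xs \<subseteq> S" and p: "p \<in> S" and q: "q \<in> S"
    and eq: "wprod G (xs @ [p]) \<otimes> q = wprod G xs"
  shows "p = q"
proof -
  have "wprod G xs \<otimes> (p \<otimes> q) = wprod G xs \<otimes> \<one>"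
    using eq xs p q by (simp add: wprod_snoc m_assoc)
  then have "p \<otimes> q = \<one>"
    using xs p q by (simp add: Units_eq del: r_one)
  then show ?thesis
    using p q by (metis gen_cancel_left gen_closed r_one)
qed

section \<open>Parabolic subgroups and support\<close>

lemma W_closed: "J \<subseteq> S \<Longrightarrow> x \<in> W J \<Longrightarrow> x \<in> carrier G"
  unfolding parabolic_def by auto

lemma one_in_W [simp]: "\<one> \<in> W J"
  unfolding parabolic_def by (auto intro!: exI[of _ "[]"])

lemma W_empty: "W {} = {\<one>}"
  unfolding parabolic_def by auto

lemma wprod_in_W: "set xs \<subseteq> J \<Longrightarrow> wprod G xs \<in> W J"
  unfolding parabolic_def by blast

lemma gen_in_W: "s \<in> J \<Longrightarrow> J \<subseteq> S \<Longrightarrow> s \<in> W J"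
  using wprod_in_W[of "[s]" J] by auto

lemma W_mono: "J \<subseteq> K \<Longrightarrow> W J \<subseteq> W K"
  unfolding parabolic_def by blast

lemma W_mult:
  assumes J: "J \<subseteq> S" and "a \<in> W J" "b \<in> W J"
  shows "a \<otimes> b \<in> W J"
proof -
  obtain xs ys where "set xs \<subseteq> J" "a = wprod G xs" "set ys \<subseteq> J" "b = wprod G ys"
    using assms unfolding parabolic_def by blast
  then show ?thesis
    using wprod_in_W[of "xs @ ys" J] wprod_append[of xs ys] J by auto
qed

lemma W_inv:
  assumes J: "J \<subseteq> S" and "a \<in> W J"
  shows "inv a \<in> W J"
proof -
  obtain xs where "set xs \<subseteq> J" "a = wprod G xs"
    using assms unfolding parabolic_def by blast
  then show ?thesis
    using wprod_in_W[of "rev xs" J] inv_wprod[of xs] J by auto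
qed

lemma W_reduced_word:
  assumes "J \<subseteq> S" "w \<in> W J"
  obtains xs where "set xs \<subseteq> J" "wprod G xs = w" "length xs = len w"
proof -
  obtain ys where "set ys \<subseteq> J" "w = wprod G ys"
    using assms(2) unfolding parabolic_def by blast
  then show thesis
    using reduced_subword[of ys] assms(1) that by (metis subset_trans)
qed

lemma W_induct [consumes 2, case_names one snoc]:
  assumes J: "J \<subseteq> S" and x: "x \<in> W J"
    and one: "P \<one>"
    and snoc: "\<And>y s. y \<in> W J \<Longrightarrow> s \<in> J \<Longrightarrow> len (y \<otimes> s) = len y + 1 \<Longrightarrow> P y \<Longrightarrow> P (y \<otimes> s)"
  shows "P x"
proof -
  have "P (wprod G xs)" if "set xs \<subseteq> J" "length xs = len (wprod G xs)" for xs
    using that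
  proof (induction xs rule: rev_induct)
    case Nil
    then show ?case using one by simp
  next
    case (snoc s xs)
    have xs: "set xs \<subseteq> S" and s: "s \<in> S"
      using snoc.prems J by auto
    have w: "wprod G (xs @ [s]) = wprod G xs \<otimes> s"
      using wprod_snoc[OF xs s] .
    have "length xs + 1 \<le> len (wprod G xs) + 1"
      using snoc.prems(2) clen_mult_le[of "wprod G xs" s] xs s w by simp
    then have red: "length xs = len (wprod G xs)"
      using clen_le_length[OF xs] by simp
    then have "P (wprod G xs)"
      using snoc.IH snoc.prems by simp
    then show ?case
      using snoc.prems red w wprod_in_W[of xs J] by (auto intro!: assms(4))
  qed
  then show ?thesis
    using W_reduced_word[OF J x] by metis
qed

lemma W_descent_exists:
  assumes J: "J \<subseteq> S" and x: "x \<in> W J"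
  shows "x \<noteq> \<one> \<Longrightarrow> \<exists>s\<in>J. len (x \<otimes> s) < len x"
  using J x
proof (induction rule: W_induct)
  case (snoc y s)
  then have "y \<in> carrier G" "s \<in> S"
    using W_closed[OF J] J by auto
  then show ?case
    using snoc.hyps by (intro bexI[of _ s]) auto
qed simp

lemma W_left_descent_exists:
  assumes J: "J \<subseteq> S" and x: "x \<in> W J" and ne: "x \<noteq> \<one>"
  obtains s where "s \<in> J" "len (s \<otimes> x) < len x"
proof -
  have xc: "x \<in> carrier G"
    using W_closed[OF J x] .
  obtain s where s: "s \<in> J" "len (inv x \<otimes> s) < len (inv x)"
    using W_descent_exists[OF J W_inv[OF J x]] ne xc by (metis inv_eq_1_iff)
  have "inv x \<otimes> s = inv (s \<otimes> x)"
    using s J xc by (auto simp: inv_mult_group)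
  then show thesis
    using that s J xc by (metis clen_inv gen_closed m_closed subsetD)
qed

lemma W_gens: "W S = carrier G"
  unfolding parabolic_def carrier_words ..

lemma descents_nonempty: "w \<in> carrier G \<Longrightarrow> w \<noteq> \<one> \<Longrightarrow> Des w \<noteq> {}"
  using W_descent_exists[of S w] W_gens unfolding descents_def by auto

lemma gen_in_W_iff: "J \<subseteq> S \<Longrightarrow> s \<in> S \<Longrightarrow> s \<in> W J \<longleftrightarrow> s \<in> J"
proof
  assume J: "J \<subseteq> S" and s: "s \<in> S" and "s \<in> W J"
  then obtain xs where "set xs \<subseteq> J" "wprod G xs = s" "length xs = 1"
    using W_reduced_word by (metis clen_gen)
  then show "s \<in> J"
    using J by (auto simp: length_Suc_conv)
qed (rule gen_in_W)

lemma reduced_word_in_W: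
  "J \<subseteq> S \<Longrightarrow> set xs \<subseteq> S \<Longrightarrow> length xs = len (wprod G xs) \<Longrightarrow> wprod G xs \<in> W J
    \<Longrightarrow> set xs \<subseteq> J"
proof (induction xs)
  case (Cons s xs)
  have J: "J \<subseteq> S" and s: "s \<in> S" and xs: "set xs \<subseteq> S"
    using Cons.prems by auto
  define w where "w = wprod G xs"
  have w: "w \<in> carrier G"
    using xs w_def by simp
  have "length xs + 1 \<le> len w + 1"
    using Cons.prems(3) clen_mult_le[of s w] s w w_def by simp
  then have red: "length xs = len w"
    using clen_le_length[OF xs] w_def by simp
  have sw: "s \<otimes> w \<in> W J"
    using Cons.prems(4) w_def by simp
  obtain ys where ys: "set ys \<subseteq> J" "wprod G ys = s \<otimes> w" "length ys = len (s \<otimes> w)"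
    using W_reduced_word[OF J sw] by blast
  have ysS: "set ys \<subseteq> S"
    using ys J by blast
  have "len (s \<otimes> wprod G ys) \<le> length ys"
    using ys Cons.prems(3) red s w w_def by simp
  then obtain i where i: "w = wprod G (drop_nth i ys)"
    using exchange_left[OF s ysS] ys s w by (metis gen_cancel_left)
  then have "w \<in> W J"
    using wprod_in_W set_drop_nth_subset ys(1) by (metis subset_trans)
  then have "set xs \<subseteq> J"
    using Cons.IH J xs red w_def by simp
  moreover have "s \<in> W J"
    using W_mult[OF J sw W_inv[OF J \<open>w \<in> W J\<close>]] s w by (simp add: m_assoc)
  ultimately show ?case
    using gen_in_W_iff[OF J s] by simp
qed simp

lemma supp_reduced_word:
  assumes xs: "set xs \<subseteq> S" and red: "length xs = len (wprod G xs)"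
  shows "sp (wprod G xs) = set xs"
proof
  show "set xs \<subseteq> sp (wprod G xs)"
    using xs red unfolding supp_def reduced_word_def by auto
  show "sp (wprod G xs) \<subseteq> set xs"
  proof
    fix s assume "s \<in> sp (wprod G xs)"
    then obtain ys where ys: "set ys \<subseteq> S" "wprod G ys = wprod G xs"
      "length ys = len (wprod G xs)" "s \<in> set ys"
      unfolding supp_def reduced_word_def by blast
    then have "set ys \<subseteq> set xs"
      using reduced_word_in_W[of "set xs" ys] wprod_in_W[of xs] xs by simp
    then show "s \<in> set xs"
      using ys(4) by blast
  qed
qed

lemma reduced_word_supp:
  assumes "w \<in> carrier G"
  obtains xs where "set xs \<subseteq> S" "length xs = len w" "wprod G xs = w" "sp w = set xs"
  using reduced_word_exists[OF assms] supp_reduced_word by metis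

lemma finite_supp: "w \<in> carrier G \<Longrightarrow> finite (sp w)"
  by (metis List.finite_set reduced_word_supp)

lemma supp_subset_gens: "w \<in> carrier G \<Longrightarrow> sp w \<subseteq> S"
  by (metis reduced_word_supp)

lemma in_W_supp: "w \<in> carrier G \<Longrightarrow> w \<in> W (sp w)"
  by (metis reduced_word_supp order_refl wprod_in_W)

lemma W_iff_supp: "J \<subseteq> S \<Longrightarrow> w \<in> carrier G \<Longrightarrow> w \<in> W J \<longleftrightarrow> sp w \<subseteq> J"
  by (metis W_mono in_W_supp reduced_word_in_W reduced_word_supp subsetD)

lemma supp_one [simp]: "sp \<one> = {}"
  using supp_reduced_word[of "[]"] by simp

lemma supp_mult:
  assumes a: "a \<in> carrier G" and b: "b \<in> carrier G" and add: "len (a \<otimes> b) = len a + len b"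
  shows "sp (a \<otimes> b) = sp a \<union> sp b"
proof -
  obtain xs where xs: "set xs \<subseteq> S" "length xs = len a" "wprod G xs = a" "sp a = set xs"
    using reduced_word_supp[OF a] .
  obtain ys where ys: "set ys \<subseteq> S" "length ys = len b" "wprod G ys = b" "sp b = set ys"
    using reduced_word_supp[OF b] .
  have "sp (wprod G (xs @ ys)) = set (xs @ ys)"
    using supp_reduced_word[of "xs @ ys"] xs ys add by (simp add: wprod_append)
  then show ?thesis
    using xs ys by (simp add: wprod_append)
qed

lemma descents_subset_supp:
  assumes w: "w \<in> carrier G"
  shows "Des w \<subseteq> sp w"
proof
  fix s assume "s \<in> Des w"
  then have s: "s \<in> S" and lt: "len (w \<otimes> s) < len w"
    unfolding descents_def by auto
  obtain xs where xs: "set xs \<subseteq> S" "length xs = len w" "wprod G xs = w" "sp w = set xs"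
    using reduced_word_supp[OF w] .
  then obtain i where "w \<otimes> s = wprod G (drop_nth i xs)"
    using exchange_right[OF s xs(1)] lt by (metis less_imp_le)
  then have "w \<otimes> s \<in> W (sp w)"
    using wprod_in_W set_drop_nth_subset xs(4) by metis
  then have "inv w \<otimes> (w \<otimes> s) \<in> W (sp w)"
    using W_mult[OF supp_subset_gens[OF w] W_inv[OF supp_subset_gens[OF w] in_W_supp[OF w]]] by blast
  then have "s \<in> W (sp w)"
    using w s by (simp flip: m_assoc)
  then show "s \<in> sp w"
    using gen_in_W_iff supp_subset_gens w s by blast
qed

section \<open>Minimal coset representatives\<close>

lemma X_closed: "u \<in> X J \<Longrightarrow> u \<in> carrier G"
  unfolding minreps_def by simp

lemma one_in_X: "J \<subseteq> S \<Longrightarrow> \<one> \<in> X J"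
  unfolding minreps_def by auto

lemma coset_min_exists: "\<exists>x\<in>W J. \<forall>y\<in>W J. len (w \<otimes> x) \<le> len (w \<otimes> y)"
  using ex_has_least_nat[of "\<lambda>x. x \<in> W J" \<one> "\<lambda>x. len (w \<otimes> x)"] by auto

lemma exchange_mult:
  assumes a: "a \<in> carrier G" and b: "b \<in> carrier G" and s: "s \<in> S"
    and add: "len (a \<otimes> b) = len a + len b" and desc: "len (a \<otimes> b \<otimes> s) < len (a \<otimes> b)"
  shows "(\<exists>a'\<in>carrier G. len a' < len a \<and> a \<otimes> b \<otimes> s = a' \<otimes> b) \<or> len (b \<otimes> s) < len b"
proof -
  obtain as where as: "set as \<subseteq> S" "length as = len a" "wprod G as = a"
    using reduced_word_exists[OF a] .
  obtain bs where bs: "set bs \<subseteq> S" "length bs = len b" "wprod G bs = b"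
    using reduced_word_exists[OF b] .
  have ab: "wprod G (as @ bs) = a \<otimes> b" "set (as @ bs) \<subseteq> S"
    using as bs by (auto simp: wprod_append)
  moreover have red: "length (as @ bs) = len (wprod G (as @ bs))"
    using ab(1) as bs add by simp
  ultimately have "len (wprod G (as @ bs) \<otimes> s) \<le> length (as @ bs)"
    using desc by simp
  then obtain i where "i < length (as @ bs)"
    "wprod G (as @ bs) \<otimes> s = wprod G (drop_nth i (as @ bs))"
    by (rule exchange_right[OF s ab(2) red])
  then have i: "i < length (as @ bs)" "a \<otimes> b \<otimes> s = wprod G (drop_nth i (as @ bs))"
    using ab(1) by simp_all
  show ?thesis
  proof (cases "i < length as")
    case True
    define a' where "a' = wprod G (drop_nth i as)"
    have a': "set (drop_nth i as) \<subseteq> S"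
      using set_drop_nth_subset[of i as] as(1) by blast
    have "a \<otimes> b \<otimes> s = a' \<otimes> b"
      using i True a' bs by (simp add: drop_nth_append wprod_append a'_def)
    moreover have "len a' < len a"
      using clen_le_length[OF a'] True as by (simp add: a'_def)
    ultimately show ?thesis
      using a' a'_def by auto
  next
    case False
    define b' where "b' = wprod G (drop_nth (i - length as) bs)"
    have b': "set (drop_nth (i - length as) bs) \<subseteq> S"
      using set_drop_nth_subset[of "i - length as" bs] bs(1) by blast
    have "a \<otimes> b \<otimes> s = a \<otimes> b'"
      using i False as b' by (simp add: drop_nth_append wprod_append b'_def)
    then have "b \<otimes> s = b'"
      using a b s b' b'_def by (simp add: m_assoc Units_eq)
    moreover have "len b' < len b"
      using clen_le_length[OF b'] False i bs by (simp add: b'_def)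
    ultimately show ?thesis
      by simp
  qed
qed

lemma clen_mult_coset_min:
  assumes J: "J \<subseteq> S" and u: "u \<in> carrier G" and min: "\<And>y. y \<in> W J \<Longrightarrow> len u \<le> len (u \<otimes> y)"
    and x: "x \<in> W J"
  shows "len (u \<otimes> x) = len u + len x"
  using J x
proof (induction rule: W_induct)
  case (snoc y s)
  have y: "y \<in> carrier G" and s: "s \<in> S"
    using snoc.hyps W_closed[OF J] J by auto
  show ?case
  proof (rule ccontr)
    assume "len (u \<otimes> (y \<otimes> s)) \<noteq> len u + len (y \<otimes> s)"
    then have "len (u \<otimes> y \<otimes> s) < len (u \<otimes> y)"
      using clen_mult_gen[OF s, of "u \<otimes> y"] snoc u y s by (simp add: m_assoc)
    then consider (left) a where "a \<in> carrier G" "len a < len u" "u \<otimes> y \<otimes> s = a \<otimes> y"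
      | (right) "len (y \<otimes> s) < len y"
      using exchange_mult[OF u y s] snoc.IH by blast
    then show False
    proof cases
      case left
      have "y \<otimes> s \<otimes> inv y \<in> W J"
        using W_mult[OF J W_mult[OF J snoc.hyps(1) gen_in_W[OF snoc.hyps(2) J]] W_inv[OF J snoc.hyps(1)]] .
      moreover have "u \<otimes> (y \<otimes> s \<otimes> inv y) = u \<otimes> y \<otimes> s \<otimes> inv y"
        using u y s by (simp add: m_assoc)
      then have "u \<otimes> (y \<otimes> s \<otimes> inv y) = a"
        using left y by (simp add: m_assoc)
      ultimately show False
        using min left by fastforce
    next
      case right
      then show False
        using snoc.hyps by simp
    qed
  qed
qed (use u in simp)

lemma coset_min_in_X:
  assumes J: "J \<subseteq> S" and u: "u \<in> carrier G" and min: "\<And>y. y \<in> W J \<Longrightarrow> len u \<le> len (u \<otimes> y)"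
  shows "u \<in> X J"
  unfolding minreps_def
proof (intro CollectI conjI ballI u)
  fix s assume s: "s \<in> J"
  then show "len u < len (u \<otimes> s)"
    using min[OF gen_in_W[OF s J]] clen_mult_gen[of s u] J u by auto
qed

lemma X_coset_min:
  assumes J: "J \<subseteq> S" and u: "u \<in> X J" and y: "y \<in> W J"
  shows "len u \<le> len (u \<otimes> y)"
proof -
  have uc: "u \<in> carrier G"
    using X_closed u .
  obtain x0 where x0: "x0 \<in> W J" and min0: "\<forall>y\<in>W J. len (u \<otimes> x0) \<le> len (u \<otimes> y)"
    using coset_min_exists by blast
  have x0c: "x0 \<in> carrier G"
    using W_closed[OF J x0] .
  have min: "len (u \<otimes> x0) \<le> len (u \<otimes> x0 \<otimes> y)" if y: "y \<in> W J" for y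
  proof -
    have "u \<otimes> x0 \<otimes> y = u \<otimes> (x0 \<otimes> y)"
      using W_closed[OF J y] x0c uc by (simp add: m_assoc)
    then show ?thesis
      using min0 W_mult[OF J x0 y] by simp
  qed
  have "x0 = \<one>"
  proof (rule ccontr)
    assume "x0 \<noteq> \<one>"
    then obtain s where s: "s \<in> J" "len (inv x0 \<otimes> s) < len (inv x0)"
      using W_descent_exists[OF J W_inv[OF J x0]] x0c by (metis inv_eq_1_iff)
    have "u \<otimes> s = u \<otimes> x0 \<otimes> (inv x0 \<otimes> s)"
      using uc x0c s J by (auto simp: m_assoc)
    moreover have "inv x0 \<otimes> s \<in> W J"
      using s J by (intro W_mult W_inv gen_in_W x0)
    ultimately have "len (u \<otimes> s) = len (u \<otimes> x0) + len (inv x0 \<otimes> s)"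
      using clen_mult_coset_min[OF J _ min] uc x0c by simp
    also have "\<dots> < len (u \<otimes> x0) + len (inv x0)"
      using s(2) by simp
    also have "\<dots> = len u"
      using clen_mult_coset_min[OF J _ min W_inv[OF J x0]] uc x0c by (simp add: m_assoc)
    finally show False
      using u s(1) unfolding minreps_def by fastforce
  qed
  then show ?thesis
    using min0 y uc by simp
qed

lemma clen_mult_X: "J \<subseteq> S \<Longrightarrow> u \<in> X J \<Longrightarrow> x \<in> W J \<Longrightarrow> len (u \<otimes> x) = len u + len x"
  using clen_mult_coset_min X_coset_min X_closed by blast

section \<open>Parabolic decomposition\<close>

lemma par_decomp_exists:
  assumes J: "J \<subseteq> S" and w: "w \<in> carrier G"
  shows "\<exists>u\<in>X J. \<exists>x\<in>W J. w = u \<otimes> x"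
proof -
  obtain x0 where x0: "x0 \<in> W J" and min0: "\<forall>y\<in>W J. len (w \<otimes> x0) \<le> len (w \<otimes> y)"
    using coset_min_exists by blast
  have x0c: "x0 \<in> carrier G"
    using W_closed[OF J x0] .
  have "w \<otimes> x0 \<in> X J"
  proof (rule coset_min_in_X[OF J])
    fix y assume y: "y \<in> W J"
    have "w \<otimes> x0 \<otimes> y = w \<otimes> (x0 \<otimes> y)"
      using W_closed[OF J y] x0c w by (simp add: m_assoc)
    then show "len (w \<otimes> x0) \<le> len (w \<otimes> x0 \<otimes> y)"
      using min0 W_mult[OF J x0 y] by simp
  qed (use w x0c in simp)
  moreover have "w = w \<otimes> x0 \<otimes> inv x0"
    using w x0c by (simp add: m_assoc)
  ultimately show ?thesis
    using W_inv[OF J x0] by blast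
qed

lemma par_decomp_unique:
  assumes J: "J \<subseteq> S" and u1: "u1 \<in> X J" and u2: "u2 \<in> X J"
    and x1: "x1 \<in> W J" and x2: "x2 \<in> W J" and eq: "u1 \<otimes> x1 = u2 \<otimes> x2"
  shows "u1 = u2 \<and> x1 = x2"
proof -
  have c: "u1 \<in> carrier G" "u2 \<in> carrier G" "x1 \<in> carrier G" "x2 \<in> carrier G"
    using u1 u2 x1 x2 X_closed W_closed[OF J] by auto
  define y where "y = x1 \<otimes> inv x2"
  have y: "y \<in> W J"
    using W_mult[OF J x1 W_inv[OF J x2]] y_def by simp
  have yc: "y \<in> carrier G"
    using c y_def by simp
  have u2_eq: "u2 = u1 \<otimes> y"
    using eq c y_def by (metis inv_closed m_assoc r_inv r_one)
  then have "len u2 = len u1 + len y"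
    using clen_mult_X[OF J u1 y] by simp
  moreover have "len u1 = len u2 + len (inv y)"
    using clen_mult_X[OF J u2 W_inv[OF J y]] u2_eq c yc by (simp add: m_assoc)
  ultimately have "y = \<one>"
    using clen_eq_0_iff yc by simp
  then show ?thesis
    using u2_eq eq c by (simp add: Units_eq)
qed

lemma par_decomp:
  assumes J: "J \<subseteq> S" and w: "w \<in> carrier G"
  shows pq_in_X: "pq J w \<in> X J" and pc_in_W: "pc J w \<in> W J" and pq_pc: "pq J w \<otimes> pc J w = w"
proof -
  have "\<exists>!u. u \<in> X J \<and> (\<exists>x\<in>W J. w = u \<otimes> x)"
    using par_decomp_exists[OF J w] par_decomp_unique[OF J] by metis
  then have q: "pq J w \<in> X J \<and> (\<exists>x\<in>W J. w = pq J w \<otimes> x)"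
    unfolding par_quot_def by (rule theI')
  then have "\<exists>!x. x \<in> W J \<and> w = pq J w \<otimes> x"
    using par_decomp_unique[OF J] by metis
  then have "pc J w \<in> W J \<and> w = pq J w \<otimes> pc J w"
    unfolding par_comp_def by (rule theI')
  then show "pq J w \<in> X J" "pc J w \<in> W J" "pq J w \<otimes> pc J w = w"
    using q by auto
qed

lemma par_decomp_eq:
  assumes J: "J \<subseteq> S" and u: "u \<in> X J" and x: "x \<in> W J"
  shows "pq J (u \<otimes> x) = u" and "pc J (u \<otimes> x) = x"
proof -
  have "u \<otimes> x \<in> carrier G"
    using X_closed[OF u] W_closed[OF J x] by blast
  then show "pq J (u \<otimes> x) = u" "pc J (u \<otimes> x) = x"
    using par_decomp[OF J] par_decomp_unique[OF J _ u _ x] by metis+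
qed

lemma pq_closed: "J \<subseteq> S \<Longrightarrow> w \<in> carrier G \<Longrightarrow> pq J w \<in> carrier G"
  using pq_in_X X_closed by blast

lemma pc_closed: "J \<subseteq> S \<Longrightarrow> w \<in> carrier G \<Longrightarrow> pc J w \<in> carrier G"
  using pc_in_W W_closed by blast

lemma clen_par_decomp: "J \<subseteq> S \<Longrightarrow> w \<in> carrier G \<Longrightarrow> len w = len (pq J w) + len (pc J w)"
  by (metis clen_mult_X par_decomp)

lemma pc_of_W: "J \<subseteq> S \<Longrightarrow> w \<in> W J \<Longrightarrow> pc J w = w"
  using par_decomp_eq(2)[OF _ one_in_X] W_closed by (metis l_one)

lemma pq_of_X: "J \<subseteq> S \<Longrightarrow> u \<in> X J \<Longrightarrow> pq J u = u"
  using par_decomp_eq(1)[OF _ _ one_in_W] X_closed by (metis r_one)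

lemma supp_par_decomp:
  assumes J: "J \<subseteq> S" and w: "w \<in> carrier G"
  shows "sp w = sp (pq J w) \<union> sp (pc J w)" and "sp (pc J w) \<subseteq> J"
proof -
  show "sp w = sp (pq J w) \<union> sp (pc J w)"
    using supp_mult[OF pq_closed[OF J w] pc_closed[OF J w]] clen_par_decomp[OF J w] pq_pc[OF J w]
    by simp
  show "sp (pc J w) \<subseteq> J"
    using W_iff_supp[OF J pc_closed[OF J w]] pc_in_W[OF J w] by blast
qed

lemma pq_in_W:
  assumes KJ: "K \<subseteq> J" and J: "J \<subseteq> S" and x: "x \<in> W J"
  shows "pq K x \<in> W J"
proof -
  have K: "K \<subseteq> S" and xc: "x \<in> carrier G"
    using KJ J W_closed[OF J x] by auto
  have "pq K x = pq K x \<otimes> pc K x \<otimes> inv (pc K x)"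
    using pq_closed[OF K xc] pc_closed[OF K xc] by (simp add: m_assoc)
  then have "pq K x = x \<otimes> inv (pc K x)"
    using pq_pc[OF K xc] by simp
  moreover have "pc K x \<in> W J"
    using pc_in_W[OF K xc] W_mono[OF KJ] by blast
  ultimately show ?thesis
    using W_mult[OF J x W_inv[OF J]] by simp
qed

lemma par_decomp_nested:
  assumes KJ: "K \<subseteq> J" and J: "J \<subseteq> S" and v: "v \<in> carrier G"
  shows "pc K (pc J v) = pc K v" and "pq K v = pq J v \<otimes> pq K (pc J v)"
proof -
  have K: "K \<subseteq> S"
    using KJ J by blast
  define a b where "a = pq J v" and "b = pc J v"
  have a: "a \<in> X J" and b: "b \<in> W J" and bc: "b \<in> carrier G"
    using pq_in_X[OF J v] pc_in_W[OF J v] pc_closed[OF J v] a_def b_def by auto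
  define b1 b2 where "b1 = pq K b" and "b2 = pc K b"
  have b1: "b1 \<in> X K" "b1 \<in> W J" and b2: "b2 \<in> W K"
    using pq_in_X[OF K bc] pq_in_W[OF KJ J b] pc_in_W[OF K bc] b1_def b2_def by auto
  have ac: "a \<in> carrier G" and b1c: "b1 \<in> carrier G" and b2c: "b2 \<in> carrier G"
    using a b1 b2 X_closed W_closed[OF K] by auto
  have "a \<otimes> b1 \<in> X K"
    unfolding minreps_def
  proof (intro CollectI conjI ballI)
    fix s assume s: "s \<in> K"
    have sJ: "s \<in> W J"
      using gen_in_W s KJ J by blast
    have "len (a \<otimes> b1 \<otimes> s) = len a + len (b1 \<otimes> s)"
      using clen_mult_X[OF J a W_mult[OF J b1(2) sJ]] ac b1c s K by (simp add: m_assoc subsetD)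
    moreover have "len b1 < len (b1 \<otimes> s)"
      using b1(1) s unfolding minreps_def by blast
    ultimately show "len (a \<otimes> b1) < len (a \<otimes> b1 \<otimes> s)"
      using clen_mult_X[OF J a b1(2)] by simp
  qed (use ac b1c in simp)
  moreover have "v = a \<otimes> b1 \<otimes> b2"
    using pq_pc[OF J v] pq_pc[OF K bc] ac b1c b2c a_def b_def b1_def b2_def by (simp add: m_assoc)
  ultimately have "pq K v = a \<otimes> b1" "pc K v = b2"
    using par_decomp_eq[OF K _ b2] by auto
  then show "pc K (pc J v) = pc K v" "pq K v = pq J v \<otimes> pq K (pc J v)"
    using a_def b_def b1_def b2_def by auto
qed

lemma descents_mult_X:
  assumes J: "J \<subseteq> S" and a: "a \<in> X J" and y: "y \<in> W J" and s: "s \<in> J"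
  shows "s \<in> Des (a \<otimes> y) \<longleftrightarrow> s \<in> Des y"
proof -
  have "len (a \<otimes> y \<otimes> s) = len a + len (y \<otimes> s)"
    using clen_mult_X[OF J a W_mult[OF J y gen_in_W[OF s J]]] a y s J X_closed W_closed[OF J]
    by (auto simp: m_assoc)
  then show ?thesis
    using clen_mult_X[OF J a y] s J unfolding descents_def by auto
qed

section \<open>The order and its intervals\<close>

lemma cox_le_closed: "u \<preceq> v \<Longrightarrow> u \<in> carrier G \<and> v \<in> carrier G"
  unfolding cox_le_def by simp

lemma cox_le_supp: "u \<preceq> v \<Longrightarrow> sp u \<subseteq> sp v"
  unfolding cox_le_def using supp_par_decomp(1) supp_subset_gens by (metis Un_upper2)

lemma cox_le_refl: "v \<in> carrier G \<Longrightarrow> v \<preceq> v"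
  unfolding cox_le_def using pc_of_W supp_subset_gens in_W_supp by blast

lemma one_cox_le: "w \<in> carrier G \<Longrightarrow> \<one> \<preceq> w"
  unfolding cox_le_def using pc_in_W[of "{}" w] W_empty by simp

lemma card_supp_less: "u \<preceq> v \<Longrightarrow> u \<noteq> v \<Longrightarrow> card (sp u) < card (sp v)"
proof -
  assume le: "u \<preceq> v" and ne: "u \<noteq> v"
  have v: "v \<in> carrier G" and pu: "pc (sp u) v = u"
    using le unfolding cox_le_def by auto
  have "sp u \<noteq> sp v"
    using pu ne pc_of_W[OF supp_subset_gens[OF v] in_W_supp[OF v]] by auto
  then show ?thesis
    using cox_le_supp[OF le] finite_supp[OF v] by (simp add: psubset_card_mono)
qed

definition interval_supps :: "'a \<Rightarrow> 'a \<Rightarrow> 'a set set" where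
  "interval_supps u v = {M. sp u \<subseteq> M \<and> M \<subseteq> sp v \<and> sp (pc M v) = M}"

lemma cox_le_interval:
  assumes le: "u \<preceq> v"
  shows "{z \<in> carrier G. u \<preceq> z \<and> z \<preceq> v} = (\<lambda>M. pc M v) ` interval_supps u v"
proof (intro equalityI subsetI)
  have u: "u \<in> carrier G" and v: "v \<in> carrier G" and pu: "pc (sp u) v = u"
    using le unfolding cox_le_def by auto
  {
    fix z assume "z \<in> {z \<in> carrier G. u \<preceq> z \<and> z \<preceq> v}"
    then have z: "u \<preceq> z" "z \<preceq> v"
      by auto
    then have "z = pc (sp z) v"
      unfolding cox_le_def by simp
    then show "z \<in> (\<lambda>M. pc M v) ` interval_supps u v"
      unfolding interval_supps_def using cox_le_supp[OF z(1)] cox_le_supp[OF z(2)] by auto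
  next
    fix z assume "z \<in> (\<lambda>M. pc M v) ` interval_supps u v"
    then obtain M where M: "sp u \<subseteq> M" "M \<subseteq> sp v" "sp (pc M v) = M" and z: "z = pc M v"
      unfolding interval_supps_def by blast
    have MS: "M \<subseteq> S"
      using M supp_subset_gens[OF v] by blast
    have zc: "z \<in> carrier G"
      using pc_closed[OF MS v] z by simp
    have "pc (sp u) z = u"
      using par_decomp_nested(1)[OF M(1) MS v] z pu by simp
    then show "z \<in> {z \<in> carrier G. u \<preceq> z \<and> z \<preceq> v}"
      unfolding cox_le_def using u v zc z M by simp
  }
qed

lemma inj_on_interval_supps: "inj_on (\<lambda>M. pc M v) (interval_supps u v)"
  unfolding interval_supps_def by (rule inj_onI) (metis (mono_tags, lifting) mem_Collect_eq)

lemma finite_interval_supps: "v \<in> carrier G \<Longrightarrow> finite (interval_supps u v)"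
  unfolding interval_supps_def by (rule finite_subset[of _ "Pow (sp v)"]) (auto simp: finite_supp)

lemma finite_cox_le_interval: "u \<preceq> v \<Longrightarrow> finite {z \<in> carrier G. u \<preceq> z \<and> z \<preceq> v}"
  using cox_le_interval finite_interval_supps cox_le_closed by simp

section \<open>The Moebius function\<close>

lemma descents_pq_pc:
  assumes KM: "K \<subseteq> M" and M: "M \<subseteq> S" and v: "v \<in> carrier G" and s: "s \<in> M"
  shows "s \<in> Des (pq K v) \<longleftrightarrow> s \<in> Des (pq K (pc M v))"
proof -
  have "pq K (pc M v) \<in> W M"
    using pq_in_W[OF KM M pc_in_W[OF M v]] .
  then show ?thesis
    using descents_mult_X[OF M pq_in_X[OF M v] _ s] par_decomp_nested(2)[OF KM M v] by simp
qed

lemma X_disjoint_descents: "u \<in> X K \<Longrightarrow> K \<inter> Des u = {}"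
  unfolding minreps_def descents_def by force

lemma mu_cond_pc_iff:
  assumes le: "u \<preceq> v" and M: "M \<in> interval_supps u v"
  shows "(sp u = M - Des (pq (sp u) (pc M v)) \<or> u = pc M v) \<longleftrightarrow> M \<subseteq> sp u \<union> Des (pq (sp u) v)"
proof -
  define K where "K = sp u"
  have u: "u \<in> carrier G" and v: "v \<in> carrier G"
    using cox_le_closed[OF le] by auto
  have KM: "K \<subseteq> M" and Mv: "M \<subseteq> sp v" and spM: "sp (pc M v) = M"
    using M unfolding interval_supps_def K_def by auto
  have MS: "M \<subseteq> S"
    using Mv supp_subset_gens[OF v] by blast
  have KS: "K \<subseteq> S"
    using KM MS by blast
  define y where "y = pq K (pc M v)"
  have shift: "s \<in> Des (pq K v) \<longleftrightarrow> s \<in> Des y" if "s \<in> M" for s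
    using descents_pq_pc[OF KM MS v that] y_def by simp
  have disj: "K \<inter> Des y = {}"
    using X_disjoint_descents pq_in_X[OF KS pc_closed[OF MS v]] y_def by simp
  show ?thesis
    unfolding K_def[symmetric] y_def[symmetric]
  proof
    assume "K = M - Des y \<or> u = pc M v"
    then show "M \<subseteq> K \<union> Des (pq K v)"
      using shift spM K_def by blast
  next
    assume "M \<subseteq> K \<union> Des (pq K v)"
    then have "K = M - Des y"
      using shift disj KM by blast
    then show "K = M - Des y \<or> u = pc M v" ..
  qed
qed

lemma supp_pc_eq:
  assumes le: "u \<preceq> v" and KM: "sp u \<subseteq> M" and M: "M \<subseteq> sp u \<union> (Des (pq (sp u) v) \<inter> sp v)"
  shows "sp (pc M v) = M"
proof -
  define K z where "K = sp u" and "z = pc M v"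
  have v: "v \<in> carrier G" and pu: "pc K v = u"
    using le unfolding cox_le_def K_def by auto
  have MS: "M \<subseteq> S" and KS: "K \<subseteq> S"
    using M KM cox_le_supp[OF le] supp_subset_gens[OF v] K_def by auto
  have zc: "z \<in> carrier G"
    using pc_closed[OF MS v] z_def by simp
  have "M \<subseteq> sp z"
  proof
    fix s assume s: "s \<in> M"
    show "s \<in> sp z"
    proof (cases "s \<in> K")
      case True
      have "pc K z = u"
        using par_decomp_nested(1)[OF KM[folded K_def] MS v] pu z_def by simp
      then show ?thesis
        using True supp_par_decomp(1)[OF KS zc] K_def by auto
    next
      case False
      then have "s \<in> Des (pq K z)"
        using descents_pq_pc[OF KM[folded K_def] MS v s] M s K_def z_def by blast
      then show ?thesis
        using descents_subset_supp[OF pq_closed[OF KS zc]] supp_par_decomp(1)[OF KS zc] by blast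
    qed
  qed
  then show ?thesis
    using supp_par_decomp(2)[OF MS v] z_def by blast
qed

lemma interval_supps_filter:
  assumes le: "u \<preceq> v"
  shows "{M \<in> interval_supps u v. M \<subseteq> sp u \<union> Des (pq (sp u) v)} =
         {M. sp u \<subseteq> M \<and> M \<subseteq> sp u \<union> (Des (pq (sp u) v) \<inter> sp v)}"
  using supp_pc_eq[OF le] cox_le_supp[OF le] unfolding interval_supps_def by blast

definition mu :: "'a \<Rightarrow> 'a \<Rightarrow> int" where
  "mu u v = (if u \<preceq> v \<and> (sp u = sp v - Des (pq (sp u) v) \<or> u = v)
             then (-1) ^ (card (sp v) - card (sp u)) else 0)"

lemma descents_pq_not_subset:
  assumes le: "u \<preceq> v" and ne: "u \<noteq> v"
  shows "\<not> Des (pq (sp u) v) \<inter> sp v \<subseteq> sp u"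
proof -
  have u: "u \<in> carrier G" and v: "v \<in> carrier G" and pu: "pc (sp u) v = u"
    using le unfolding cox_le_def by auto
  have K: "sp u \<subseteq> S"
    using supp_subset_gens[OF u] .
  have "pq (sp u) v \<noteq> \<one>"
    using pq_pc[OF K v] pu ne u by auto
  then have "Des (pq (sp u) v) \<noteq> {}"
    using descents_nonempty pq_closed[OF K v] by blast
  moreover have "Des (pq (sp u) v) \<subseteq> sp v"
    using descents_subset_supp[OF pq_closed[OF K v]] supp_par_decomp(1)[OF K v] by blast
  moreover have "sp u \<inter> Des (pq (sp u) v) = {}"
    using X_disjoint_descents[OF pq_in_X[OF K v]] .
  ultimately show ?thesis
    by blast
qed

lemma sum_mu_interval:
  assumes le: "u \<preceq> v" and ne: "u \<noteq> v"
  shows "(\<Sum>z\<in>{z \<in> carrier G. u \<preceq> z \<and> z \<preceq> v}. mu u z) = 0"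
proof -
  define K D where "K = sp u" and "D = Des (pq (sp u) v)"
  have v: "v \<in> carrier G"
    using cox_le_closed[OF le] by simp
  have "(\<Sum>z\<in>{z \<in> carrier G. u \<preceq> z \<and> z \<preceq> v}. mu u z) = (\<Sum>M\<in>interval_supps u v. mu u (pc M v))"
    unfolding cox_le_interval[OF le] using sum.reindex[OF inj_on_interval_supps] by simp
  also have "\<dots> = (\<Sum>M\<in>interval_supps u v. if M \<subseteq> K \<union> D then (-1::int) ^ (card M - card K) else 0)"
  proof (rule sum.cong)
    fix M assume M: "M \<in> interval_supps u v"
    then have "u \<preceq> pc M v"
      using cox_le_interval[OF le] by blast
    then show "mu u (pc M v) = (if M \<subseteq> K \<union> D then (-1::int) ^ (card M - card K) else 0)"
      using mu_cond_pc_iff[OF le M] M unfolding mu_def interval_supps_def K_def D_def by auto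
  qed simp
  also have "\<dots> = (\<Sum>M\<in>{M \<in> interval_supps u v. M \<subseteq> K \<union> D}. (-1::int) ^ (card M - card K))"
    using finite_interval_supps[OF v] by (simp add: sum.inter_filter)
  also have "\<dots> = (\<Sum>M | K \<subseteq> M \<and> M \<subseteq> K \<union> (D \<inter> sp v). (-1::int) ^ (card M - card K))"
    using interval_supps_filter[OF le] K_def D_def by simp
  also have "\<dots> = 0"
    using descents_pq_not_subset[OF le ne] finite_supp[OF v] finite_supp cox_le_closed[OF le]
      K_def D_def
    by (intro sum_alternating_supersets) auto
  finally show ?thesis .
qed

theorem mobius_eq_mu: "mobius (\<preceq>) (carrier G) = mu"
proof (rule mobius_eqI)
  show "card (sp z) < card (sp v)" if "z \<preceq> v" "z \<noteq> v" for z v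
    using card_supp_less that .
  show "is_mobius (\<preceq>) (carrier G) mu"
  proof (rule is_mobiusI)
    show "mu u v = 0" if "\<not> (u \<in> carrier G \<and> v \<in> carrier G \<and> u \<preceq> v)" for u v
      using that cox_le_closed unfolding mu_def by auto
    show "mu u u = 1" if "u \<in> carrier G" for u
      using that cox_le_refl unfolding mu_def by simp
  qed (use cox_le_refl finite_cox_le_interval sum_mu_interval in auto)
qed

section \<open>Longest elements\<close>

lemma set_alt_gens: "r \<in> S \<Longrightarrow> s \<in> S \<Longrightarrow> set (alt r s k) \<subseteq> S"
  using set_alt_subset[of r s k] by blast

lemma alt_exchange_index:
  assumes r: "r \<in> S" and s: "s \<in> S" and rs: "r \<noteq> s" and k: "k = Suc k'"
    and red: "len (wprod G (alt r s k)) = k" and i: "i < k"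
    and del: "wprod G (alt r s k) \<otimes> (if even k then r else s) = wprod G (drop_nth i (alt r s k))"
  shows "i = 0"
proof (rule ccontr)
  define xs q where "xs = alt r s k" and "q = (if even k then r else s)"
  have xs: "set xs \<subseteq> S" and q: "q \<in> S"
    using set_alt_gens[OF r s] r s unfolding xs_def q_def by auto
  assume "i \<noteq> 0"
  then consider "i = k'" | "0 < i" "i < k'"
    using i k by linarith
  then show False
  proof cases
    case 1
    define p where "p = (if even k' then r else s)"
    have "xs = alt r s k' @ [p]"
      unfolding xs_def p_def k by (rule alt_Suc_snoc)
    then have "p = q"
      using wprod_snoc_cancel[OF set_alt_gens[OF r s], of p q] del 1 r s q
      by (simp add: drop_nth_def p_def xs_def q_def)
    then show False
      using rs k unfolding p_def q_def by (simp split: if_splits)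
  next
    case 2
    have "drop_nth i xs ! (i - 1) = drop_nth i xs ! Suc (i - 1)"
      using 2 k nth_alt[of "i - 1" k r s] nth_alt[of "Suc i" k r s]
      unfolding xs_def drop_nth_def by (simp add: nth_append min_def)
    moreover have "set (drop_nth i xs) \<subseteq> S"
      using set_drop_nth_subset[of i xs] xs by blast
    moreover have "length (drop_nth i xs) = k'"
      using i k unfolding xs_def by simp
    ultimately have "len (wprod G xs \<otimes> q) + 2 \<le> k'"
      using clen_adjacent_equal[of "drop_nth i xs" "i - 1"] 2 del unfolding xs_def q_def by simp
    moreover have "k' \<le> len (wprod G xs \<otimes> q)"
      using clen_mult_gen[OF q, of "wprod G xs"] xs red k unfolding xs_def by auto
    ultimately show False
      by simp
  qed
qed

lemma alt_braid:
  assumes r: "r \<in> S" and s: "s \<in> S" and rs: "r \<noteq> s" and k: "0 < k"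
    and red: "len (wprod G (alt r s k)) = k"
    and desc: "len (wprod G (alt r s k) \<otimes> (if even k then r else s)) < k"
  shows "wprod G (alt r s k) = wprod G (alt s r k)"
proof -
  define xs q where "xs = alt r s k" and "q = (if even k then r else s)"
  have xs: "set xs \<subseteq> S" and q: "q \<in> S"
    using set_alt_gens[OF r s] r s unfolding xs_def q_def by auto
  obtain k' where k': "k = Suc k'"
    using k by (cases k) auto
  have "length xs = len (wprod G xs)" and "len (wprod G xs \<otimes> q) \<le> length xs"
    using red desc unfolding xs_def q_def by simp_all
  then obtain i where i: "i < length xs" and del: "wprod G xs \<otimes> q = wprod G (drop_nth i xs)"
    using exchange_right[OF q xs] by blast
  moreover have "i < k"
    using i unfolding xs_def by simp
  ultimately have "i = 0"
    using alt_exchange_index[OF r s rs k' red] unfolding xs_def q_def by blast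
  then have "wprod G xs \<otimes> q = wprod G (alt s r k')"
    using del k' unfolding xs_def by (simp add: drop_nth_def)
  then have "wprod G xs = wprod G (alt s r k' @ [q])"
    using xs q set_alt_gens[OF s r] by (metis gen_cancel_right wprod_closed wprod_snoc)
  also have "alt s r k' @ [q] = alt s r k"
    unfolding k' alt_Suc_snoc using k' q_def by simp
  finally show ?thesis
    unfolding xs_def .
qed

text \<open>\<open>weak_le y z\<close>: some reduced word of \<open>z\<close> begins with a reduced word of \<open>y\<close>.\<close>

definition weak_le :: "'a \<Rightarrow> 'a \<Rightarrow> bool" where
  "weak_le y z \<longleftrightarrow> len z = len y + len (inv y \<otimes> z)"

lemma weak_leI:
  assumes "y \<in> carrier G" "z \<in> carrier G" "len y + len (inv y \<otimes> z) \<le> len z"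
  shows "weak_le y z"
  using assms clen_mult_le[of y "inv y \<otimes> z"] unfolding weak_le_def by simp

lemma weak_le_one: "z \<in> carrier G \<Longrightarrow> weak_le \<one> z"
  unfolding weak_le_def by simp

lemma weak_le_snoc:
  assumes le: "weak_le y z" and y: "y \<in> carrier G" and z: "z \<in> carrier G" and t: "t \<in> S"
    and desc: "len (t \<otimes> (inv y \<otimes> z)) < len (inv y \<otimes> z)"
  shows "weak_le (y \<otimes> t) z" and "len (y \<otimes> t) = len y + 1"
proof -
  define c where "c = inv y \<otimes> z"
  have c: "c \<in> carrier G"
    using y z c_def by simp
  have tc: "len (t \<otimes> c) + 1 = len c"
    using clen_gen_mult[OF t c] desc c_def by auto
  have "z = y \<otimes> t \<otimes> (t \<otimes> c)"
    using y z t c_def by (simp add: m_assoc)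
  then have "len z \<le> len (y \<otimes> t) + len (t \<otimes> c)"
    using clen_mult_le y t c by simp
  moreover have "len (y \<otimes> t) \<le> len y + 1"
    using clen_mult_le[of y t] y t by simp
  moreover have "inv (y \<otimes> t) \<otimes> z = t \<otimes> c"
    using y z t c_def by (simp add: inv_mult_group m_assoc)
  ultimately show "weak_le (y \<otimes> t) z" "len (y \<otimes> t) = len y + 1"
    using le tc c_def unfolding weak_le_def by simp_all
qed

lemma weak_le_prefix:
  assumes le: "weak_le (a \<otimes> b) z" and add: "len (a \<otimes> b) = len a + len b"
    and a: "a \<in> carrier G" and b: "b \<in> carrier G" and z: "z \<in> carrier G"
  shows "weak_le a z"
proof (rule weak_leI[OF a z])
  have "inv a \<otimes> z = b \<otimes> (inv (a \<otimes> b) \<otimes> z)"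
    using a b z by (simp add: inv_mult_group m_assoc)
  then have "len (inv a \<otimes> z) \<le> len b + len (inv (a \<otimes> b) \<otimes> z)"
    using clen_mult_le a b z by simp
  then show "len a + len (inv a \<otimes> z) \<le> len z"
    using le add unfolding weak_le_def by simp
qed

text \<open>
  If the alternating word stopped being reduced, \<open>alt_braid\<close> would let it start with \<open>s\<close>,
  and \<open>y s\<close> would be a prefix of \<open>z\<close>.
\<close>

lemma alt_prefix_Suc_reduced:
  assumes r: "r \<in> S" and s: "s \<in> S" and rs: "r \<noteq> s" and j: "0 < j"
    and y: "y \<in> carrier G" and z: "z \<in> carrier G"
    and ys: "len y < len (y \<otimes> s)" "\<not> weak_le (y \<otimes> s) z"
    and red: "len (wprod G (alt r s j)) = j"
    and add: "len (y \<otimes> wprod G (alt r s j)) = len y + j"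
    and pre: "weak_le (y \<otimes> wprod G (alt r s j)) z"
  shows "len (wprod G (alt r s (Suc j))) = Suc j"
proof (rule ccontr)
  define d q where "d = wprod G (alt r s j)" and "q = (if even j then r else s)"
  have d: "d \<in> carrier G" and q: "q \<in> S"
    using set_alt_gens[OF r s] r s unfolding d_def q_def by auto
  have next_d: "wprod G (alt r s (Suc j)) = d \<otimes> q"
    using set_alt_gens[OF r s] q unfolding d_def q_def by (simp only: alt_Suc_snoc wprod_snoc)
  assume "len (wprod G (alt r s (Suc j))) \<noteq> Suc j"
  then have "len (d \<otimes> q) < j"
    using clen_mult_gen[OF q d] red next_d d_def by auto
  then have "d = wprod G (alt s r j)"
    using alt_braid[OF r s rs j] red unfolding d_def q_def by simp
  obtain j' where j': "j = Suc j'"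
    using j by (cases j) auto
  define e where "e = wprod G (alt r s j')"
  have e: "e \<in> carrier G" "len e \<le> j'" "d = s \<otimes> e"
    using \<open>d = wprod G (alt s r j)\<close> set_alt_gens[OF r s] clen_le_length[of "alt r s j'"]
    unfolding e_def j' by auto
  have ysc: "y \<otimes> s \<in> carrier G"
    using y s by simp
  have yd: "y \<otimes> d = y \<otimes> s \<otimes> e"
    using e y s by (simp add: m_assoc)
  moreover have "len (y \<otimes> s) = len y + 1"
    using clen_mult_gen[OF s y] ys(1) by auto
  ultimately have "len (y \<otimes> s \<otimes> e) = len (y \<otimes> s) + len e"
    using add e j' clen_mult_le[OF ysc e(1)] d_def by simp
  then have "weak_le (y \<otimes> s) z"
    using weak_le_prefix[OF _ _ ysc e(1) z] pre yd d_def by simp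
  then show False
    using ys(2) by simp
qed

text \<open>
  \<open>IH\<close> is the induction hypothesis of \<open>weak_le_ascent\<close> below.
\<close>

lemma alt_prefixes:
  assumes K: "K \<subseteq> S" and z: "z \<in> carrier G"
    and IH: "\<And>y' t. len (inv y' \<otimes> z) < len (inv y \<otimes> z) \<Longrightarrow> y' \<in> W K \<Longrightarrow> weak_le y' z \<Longrightarrow>
               t \<in> K \<Longrightarrow> len y' < len (y' \<otimes> t) \<Longrightarrow> weak_le (y' \<otimes> t) z"
    and y: "y \<in> W K" "weak_le y z" and r: "r \<in> K" and s: "s \<in> K" and rs: "r \<noteq> s"
    and yr: "len y < len (y \<otimes> r)" "weak_le (y \<otimes> r) z"
    and ys: "len y < len (y \<otimes> s)" "\<not> weak_le (y \<otimes> s) z"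
    and j: "0 < j"
  shows "len (wprod G (alt r s j)) = j \<and> weak_le (y \<otimes> wprod G (alt r s j)) z"
  using j
proof (induction j rule: nat_induct_non_zero)
  case 1
  show ?case
    using r K yr by auto
next
  case (Suc j)
  define J where "J = {r, s}"
  have J: "J \<subseteq> S" "J \<subseteq> K"
    using r s K J_def by auto
  have rS: "r \<in> S" and sS: "s \<in> S" and yc: "y \<in> carrier G"
    using r s K W_closed y(1) by auto
  have yX: "y \<in> X J"
    using yc yr(1) ys(1) unfolding minreps_def J_def by auto
  define d q where "d = wprod G (alt r s j)" and "q = (if even j then r else s)"
  have dJ: "d \<in> W J" and qJ: "q \<in> J"
    using wprod_in_W[OF set_alt_subset] unfolding d_def q_def J_def by auto
  have dc: "d \<in> carrier G" and q: "q \<in> S"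
    using W_closed[OF J(1) dJ] qJ J by auto
  have next_d: "wprod G (alt r s (Suc j)) = d \<otimes> q"
    using set_alt_gens[OF rS sS] q unfolding d_def q_def by (simp only: alt_Suc_snoc wprod_snoc)
  have ld: "len d = j" and yd: "weak_le (y \<otimes> d) z"
    using Suc.IH d_def by auto
  have lyd: "len (y \<otimes> d) = len y + j"
    using clen_mult_X[OF J(1) yX dJ] ld by simp
  have ldq: "len (d \<otimes> q) = Suc j"
    using alt_prefix_Suc_reduced[OF rS sS rs Suc.hyps yc z ys] ld lyd yd next_d d_def by simp
  then have "len (y \<otimes> d \<otimes> q) = len (y \<otimes> d) + 1"
    using clen_mult_X[OF J(1) yX W_mult[OF J(1) dJ gen_in_W[OF qJ J(1)]]] lyd yc dc q
    by (simp add: m_assoc)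
  moreover have "len (inv (y \<otimes> d) \<otimes> z) < len (inv y \<otimes> z)"
    using y(2) yd lyd Suc.hyps unfolding weak_le_def by simp
  moreover have "y \<otimes> d \<in> W K"
    using W_mult[OF K y(1)] W_mono[OF J(2)] dJ by blast
  ultimately have "weak_le (y \<otimes> d \<otimes> q) z"
    using IH yd qJ J(2) by auto
  then show ?case
    using next_d ldq yc dc q by (simp add: m_assoc)
qed

lemma weak_le_second_ascent:
  assumes K: "K \<subseteq> S" and z: "z \<in> carrier G"
    and IH: "\<And>y' t. len (inv y' \<otimes> z) < len (inv y \<otimes> z) \<Longrightarrow> y' \<in> W K \<Longrightarrow> weak_le y' z \<Longrightarrow>
               t \<in> K \<Longrightarrow> len y' < len (y' \<otimes> t) \<Longrightarrow> weak_le (y' \<otimes> t) z"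
    and y: "y \<in> W K" "weak_le y z" and r: "r \<in> K" and t: "t \<in> K" and rt: "r \<noteq> t"
    and yr: "len y < len (y \<otimes> r)" "weak_le (y \<otimes> r) z" and yt: "len y < len (y \<otimes> t)"
  shows "weak_le (y \<otimes> t) z"
proof (rule ccontr)
  assume nt: "\<not> weak_le (y \<otimes> t) z"
  define a where "a = wprod G (alt r t (Suc (len z)))"
  have "len a = Suc (len z) \<and> weak_le (y \<otimes> a) z"
    unfolding a_def using alt_prefixes[OF K z IH y r t rt yr yt nt, where j = "Suc (len z)"] by blast
  moreover have "y \<in> X {r, t}"
    using W_closed[OF K y(1)] yr(1) yt unfolding minreps_def by auto
  moreover have "a \<in> W {r, t}"
    unfolding a_def by (rule wprod_in_W[OF set_alt_subset])
  moreover have "{r, t} \<subseteq> S"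
    using r t K by blast
  ultimately have "len (y \<otimes> a) = len y + Suc (len z)" "weak_le (y \<otimes> a) z"
    using clen_mult_X[of "{r, t}" y a] by auto
  then show False
    unfolding weak_le_def by simp
qed

lemma weak_le_ascent:
  assumes K: "K \<subseteq> S" and zK: "z \<in> W K" and top: "\<And>s. s \<in> K \<Longrightarrow> len (z \<otimes> s) < len z"
  shows "y \<in> W K \<Longrightarrow> weak_le y z \<Longrightarrow> t \<in> K \<Longrightarrow> len y < len (y \<otimes> t) \<Longrightarrow> weak_le (y \<otimes> t) z"
proof (induction "len (inv y \<otimes> z)" arbitrary: y t rule: less_induct)
  case less
  have z: "z \<in> carrier G" and y: "y \<in> carrier G"
    using zK less.prems K W_closed by auto
  define c where "c = inv y \<otimes> z"
  have cK: "c \<in> W K"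
    using W_mult[OF K W_inv[OF K less.prems(1)] zK] c_def by simp
  have "c \<noteq> \<one>"
  proof
    assume "c = \<one>"
    then have "y = z"
      using y z c_def by (metis inv_cancel_left r_one)
    then show False
      using top[OF less.prems(3)] less.prems(4) by simp
  qed
  then obtain r where r: "r \<in> K" "len (r \<otimes> c) < len c"
    using W_left_descent_exists[OF K cK] by blast
  then have yr: "weak_le (y \<otimes> r) z" "len y < len (y \<otimes> r)"
    using weak_le_snoc[OF less.prems(2) y z] K c_def by auto
  show ?case
  proof (cases "r = t")
    case False
    then show ?thesis
      using weak_le_second_ascent[OF K z less.hyps less.prems(1,2) r(1) less.prems(3)] yr less.prems(4)
      by blast
  qed (use yr in simp)
qed

lemma weak_le_top:
  assumes K: "K \<subseteq> S" and zK: "z \<in> W K" and top: "\<And>s. s \<in> K \<Longrightarrow> len (z \<otimes> s) < len z"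
    and y: "y \<in> W K"
  shows "weak_le y z"
  using K y
proof (induction rule: W_induct)
  case one
  then show ?case
    using weak_le_one W_closed[OF K zK] by simp
next
  case (snoc y s)
  then show ?case
    using weak_le_ascent[OF K zK top] by simp
qed

lemma longest_eqI:
  assumes K: "K \<subseteq> S" and fin: "finite K" and zK: "z \<in> W K"
    and top: "\<And>s. s \<in> K \<Longrightarrow> len (z \<otimes> s) < len z"
  shows "finite (W K)" and "longest G S K = z"
proof -
  have max: "len y \<le> len z" if "y \<in> W K" for y
    using weak_le_top[OF K zK top that] unfolding weak_le_def by simp
  have "W K \<subseteq> wprod G ` {xs. set xs \<subseteq> K \<and> length xs \<le> len z}"
  proof
    fix y assume y: "y \<in> W K"
    then obtain ys where "set ys \<subseteq> K" "wprod G ys = y" "length ys = len y"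
      using W_reduced_word[OF K] by blast
    then show "y \<in> wprod G ` {xs. set xs \<subseteq> K \<and> length xs \<le> len z}"
      using max[OF y] by force
  qed
  then show "finite (W K)"
    using finite_lists_length_le[OF fin] finite_subset by blast
  show "longest G S K = z"
    unfolding longest_def
  proof (rule the_equality)
    show "z \<in> W K \<and> (\<forall>x\<in>W K. len x \<le> len z)"
      using zK max by simp
  next
    fix w assume w: "w \<in> W K \<and> (\<forall>x\<in>W K. len x \<le> len w)"
    have wc: "w \<in> carrier G" and zc: "z \<in> carrier G"
      using w zK W_closed[OF K] by auto
    have "len z = len w + len (inv w \<otimes> z)"
      using weak_le_top[OF K zK top] w unfolding weak_le_def by blast
    moreover have "len z \<le> len w"
      using w zK by blast
    ultimately have "inv w \<otimes> z = \<one>"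
      using clen_eq_0_iff[of "inv w \<otimes> z"] wc zc by simp
    then show "w = z"
      using wc zc inv_solve_left'[of \<one> w z] by simp
  qed
qed

lemma longest_top:
  assumes K: "K \<subseteq> S" and fin: "finite (W K)"
  shows "longest G S K \<in> W K" and "\<And>s. s \<in> K \<Longrightarrow> len (longest G S K \<otimes> s) < len (longest G S K)"
proof -
  have "len ` W K \<noteq> {}"
    using one_in_W by blast
  then have "Max (len ` W K) \<in> len ` W K"
    using Max_in finite_imageI[OF fin] by blast
  then obtain m where mx: "Max (len ` W K) = len m" and m: "m \<in> W K"
    by (rule imageE)
  have mmax: "len x \<le> len m" if "x \<in> W K" for x
    using Max_ge[OF finite_imageI[OF fin] imageI[OF that, of len]] mx by simp
  have top: "len (m \<otimes> s) < len m" if s: "s \<in> K" for s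
    using mmax[OF W_mult[OF K m gen_in_W[OF s K]]] clen_mult_gen[of s m] s K W_closed[OF K m]
    by auto
  have "finite K"
    using finite_subset[OF _ fin] gen_in_W K by blast
  then have "longest G S K = m"
    using longest_eqI(2)[OF K _ m top] by simp
  then show "longest G S K \<in> W K" "\<And>s. s \<in> K \<Longrightarrow> len (longest G S K \<otimes> s) < len (longest G S K)"
    using m top by auto
qed

lemma top_iff_longest:
  assumes w: "w \<in> carrier G"
  shows "sp w \<subseteq> Des w \<longleftrightarrow> finite (W (sp w)) \<and> w = longest G S (sp w)"
proof -
  have K: "sp w \<subseteq> S"
    using supp_subset_gens[OF w] .
  have "sp w \<subseteq> Des w \<longleftrightarrow> (\<forall>s\<in>sp w. len (w \<otimes> s) < len w)"
    using K unfolding descents_def by auto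
  then show ?thesis
    using longest_eqI[OF K finite_supp[OF w] in_W_supp[OF w]] longest_top[OF K] by metis
qed

lemma mu_one:
  assumes w: "w \<in> carrier G"
  shows "mu \<one> w = (if finite (W (sp w)) \<and> w = longest G S (sp w) then (-1) ^ card (sp w) else 0)"
proof -
  have "w \<in> X {}"
    using w unfolding minreps_def by simp
  then have "pq {} w = w"
    using pq_of_X by simp
  then show ?thesis
    unfolding mu_def using one_cox_le[OF w] top_iff_longest[OF w] by auto
qed

end

theorem theorem3:
  fixes G :: "'a monoid" and S :: "'a set" and u v :: 'a
  assumes "coxeter_system G S" and "finite S"
    and "u \<in> carrier G" and "v \<in> carrier G" and "cox_le G S u v"
  shows "mobius (cox_le G S) (carrier G) u v =
           (if supp G S u = supp G S v - descents G S (par_quot G S (supp G S u) v) \<or> u = v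
            then (-1::int) ^ (card (supp G S v) - card (supp G S u)) else 0) \<and>
         (\<forall>w\<in>carrier G. mobius (cox_le G S) (carrier G) \<one>\<^bsub>G\<^esub> w =
           (if finite (parabolic G (supp G S w)) \<and> w = longest G S (supp G S w)
            then (-1::int) ^ card (supp G S w) else 0))"
proof -
  interpret coxeter G S
    using coxeter_system_imp_coxeter[OF assms(1)] .
  show ?thesis
    using assms(5) mu_one by (simp add: mobius_eq_mu mu_def)
qed

end
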